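(* Let $G$ be a finite simple graph with $n$ vertices. Then there exists a sequence of distinct vertices $v_1,\dots,v_n$ of $G$ with the following property. Define $G_0:=G$ and $G_k:=G_{k-1}-v_k$ (the graph obtained by deleting the vertex $v_k$ and its incident edges) for $1\le k\le n$. Then $\nu(G_k)=\nu(G)-k$ for all $k<\nu(G)$, and $\nu(G_k)=0$ for all $k\ge \nu(G)$.
   Context: For a finite simple graph $G$ with vertex set $\{v_1,\dots,v_n\}$, the closed adjacency matrix $N(G)$ is the $n\times n$ matrix over $\mathbb{Z}_2$ whose $(i,j)$ entry is $1$ iff $i=j$ or $v_i$ is adjacent to $v_j$. The nullity of $G$ is $\nu(G):=\dim \operatorname{Ker}(N(G))$ over $\mathbb{Z}_2$. By convention, the graph with no vertices $K_0$ has $\nu(K_0)=0$. *)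

theory Defs
  imports Main "HOL.Vector_Spaces" "HOL-Library.Z2" "HOL-Library.Function_Algebras"
begin

text \<open>A finite simple graph is given by a finite vertex set V and a symmetric,
irreflexive adjacency relation E (only its restriction to V matters).\<close>

definition simple_graph :: "'a set \<Rightarrow> ('a \<Rightarrow> 'a \<Rightarrow> bool) \<Rightarrow> bool" where
  "simple_graph V E \<longleftrightarrow> finite V \<and> (\<forall>u v. E u v \<longrightarrow> E v u) \<and> (\<forall>v. \<not> E v v)"

definition closed_adj :: "('a \<Rightarrow> 'a \<Rightarrow> bool) \<Rightarrow> 'a \<Rightarrow> 'a \<Rightarrow> bit" where
  "closed_adj E u v = (if u = v \<or> E u v then 1 else 0)"

text \<open>Vectors in Z2^V are functions 'a => bit vanishing outside V; the kernel of N(G).\<close>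
definition closed_kernel :: "'a set \<Rightarrow> ('a \<Rightarrow> 'a \<Rightarrow> bool) \<Rightarrow> ('a \<Rightarrow> bit) set" where
  "closed_kernel V E = {x. (\<forall>v. v \<notin> V \<longrightarrow> x v = 0) \<and>
                            (\<forall>u\<in>V. (\<Sum>v\<in>V. closed_adj E u v * x v) = 0)}"

definition nullity :: "'a set \<Rightarrow> ('a \<Rightarrow> 'a \<Rightarrow> bool) \<Rightarrow> nat" where
  "nullity V E = vector_space.dim (\<lambda>(c::bit) (x::'a \<Rightarrow> bit). (\<lambda>v. c * x v)) (closed_kernel V E)"

definition del_vertices :: "'a set \<Rightarrow> ('a \<Rightarrow> 'a \<Rightarrow> bool) \<Rightarrow> 'a set \<Rightarrow> 'a set \<times> ('a \<Rightarrow> 'a \<Rightarrow> bool)" where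
  "del_vertices V E S = (V - S, \<lambda>u v. E u v \<and> u \<notin> S \<and> v \<notin> S)"

end

theory Submission
  imports Defs
begin

text \<open>If \<open>x\<close> is a kernel vector of \<open>N(G)\<close> with \<open>x\<^sub>v = 1\<close>, symmetry of \<open>N(G)\<close> shows that the
kernel of \<open>N(G - v)\<close> is exactly the hyperplane \<open>{z \<in> Ker N(G). z\<^sub>v = 0}\<close>, so deleting \<open>v\<close>
lowers the nullity by one. If \<open>N(G)\<close> is nonsingular, its inverse \<open>W\<close> is symmetric; were its
diagonal zero, \<open>W\<close> would be alternating over \<open>\<int>\<^sub>2\<close>, so \<open>x\<^sup>T W x = 0\<close> for all \<open>x\<close>, whereas
the \<open>u\<close>-th column \<open>x\<close> of \<open>N(G)\<close> gives \<open>x\<^sup>T W x = N\<^sub>u\<^sub>u = 1\<close>. A vertex \<open>v\<close> with \<open>W\<^sub>v\<^sub>v = 1\<close>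
keeps \<open>N(G - v)\<close> nonsingular, because a nonzero kernel vector of \<open>N(G - v)\<close> would be the
\<open>v\<close>-th column of \<open>W\<close>, which vanishes at \<open>v\<close>. Deleting vertices one at a time by these two
rules gives the required order.\<close>

declare add_bit_eq_xor [simp del] mult_bit_eq_and [simp del]

interpretation Z2: vector_space "\<lambda>(c::bit) (x::'a \<Rightarrow> bit). (\<lambda>v. c * x v)"
  by unfold_locales (auto simp: fun_eq_iff algebra_simps)

lemma bit_add_self [simp]: "(b::bit) + b = 0"
  by (cases b) (auto simp flip: one_add_one)

lemma Z2_dim_eq_0_iff:
  fixes K :: "('a \<Rightarrow> bit) set"
  assumes "finite K"
  shows "Z2.dim K = 0 \<longleftrightarrow> K \<subseteq> {0}"
  by (metis assms Z2.basis_exists card_eq_0_iff Z2.dim_span finite_subset Z2.span_empty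
      subset_empty subset_singletonD)

lemma Z2_dim_eq_Suc_dim_hyperplane:
  fixes K :: "('a \<Rightarrow> bit) set"
  assumes fin: "finite K" and K: "Z2.subspace K" and x: "x \<in> K" "x v = 1"
  shows "Z2.dim K = Suc (Z2.dim {z\<in>K. z v = 0})"
proof -
  let ?H = "{z\<in>K. z v = 0}"
  obtain B where B: "B \<subseteq> ?H" "Z2.independent B" "?H \<subseteq> Z2.span B" "card B = Z2.dim ?H"
    by (rule Z2.basis_exists)
  have "Z2.subspace {z::'a\<Rightarrow>bit. z v = 0}"
    unfolding Z2.subspace_def by (simp add: ring_distribs)
  with B(1) have "Z2.span B \<subseteq> {z. z v = 0}"
    by (intro Z2.span_minimal) auto
  with x have x_notin: "x \<notin> Z2.span B"
    by auto
  have xB_sub: "insert x B \<subseteq> K"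
    using B(1) x by auto
  show ?thesis
  proof (rule Z2.dim_unique[OF xB_sub])
    show "K \<subseteq> Z2.span (insert x B)"
    proof
      fix z assume z: "z \<in> K"
      have "z - (\<lambda>t. z v * x t) \<in> K"
        using K z x by (intro Z2.subspace_diff Z2.subspace_scale)
      moreover have "(z - (\<lambda>t. z v * x t)) v = 0"
        using x(2) by simp
      ultimately have "z - (\<lambda>t. z v * x t) \<in> Z2.span B"
        using B(3) by blast
      then show "z \<in> Z2.span (insert x B)"
        unfolding Z2.span_breakdown_eq by blast
    qed
    show "Z2.independent (insert x B)"
      using Z2.independent_insertI[OF x_notin B(2)] .
    have "finite B"
      using finite_subset[OF xB_sub fin] by simp
    moreover have "x \<notin> B"
      using x_notin Z2.span_base by blast
    ultimately show "card (insert x B) = Suc (Z2.dim ?H)"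
      using B(4) by simp
  qed
qed

definition closed_adj_mult :: "'a set \<Rightarrow> ('a \<Rightarrow> 'a \<Rightarrow> bool) \<Rightarrow> ('a \<Rightarrow> bit) \<Rightarrow> 'a \<Rightarrow> bit" where
  "closed_adj_mult V E x u = (\<Sum>w\<in>V. closed_adj E u w * x w)"

lemma closed_kernel_iff:
  "x \<in> closed_kernel V E \<longleftrightarrow>
     (\<forall>v. v \<notin> V \<longrightarrow> x v = 0) \<and> (\<forall>u\<in>V. closed_adj_mult V E x u = 0)"
  by (simp add: closed_kernel_def closed_adj_mult_def)

lemma closed_adj_mult_add:
  "closed_adj_mult V E (x + y) u = closed_adj_mult V E x u + closed_adj_mult V E y u"
  by (simp add: closed_adj_mult_def sum.distrib algebra_simps)

lemma closed_adj_mult_scale: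
  "closed_adj_mult V E (\<lambda>t. c * x t) u = c * closed_adj_mult V E x u"
  by (simp add: closed_adj_mult_def sum_distrib_left algebra_simps)

lemma closed_adj_mult_delete_vertex:
  assumes "finite V" "v \<in> V" "y v = 0"
  shows "closed_adj_mult (V - {v}) E y u = closed_adj_mult V E y u"
  using assms by (simp add: closed_adj_mult_def sum.remove)

lemma closed_adj_mult_self_adjoint:
  assumes sym: "\<forall>u v. E u v \<longrightarrow> E v u"
  shows "(\<Sum>t\<in>V. x t * closed_adj_mult V E y t) = (\<Sum>t\<in>V. y t * closed_adj_mult V E x t)"
proof -
  have adj_sym: "closed_adj E s t = closed_adj E t s" for s t
    using sym by (auto simp: closed_adj_def)
  have "(\<Sum>s\<in>V. x s * closed_adj_mult V E y s) = (\<Sum>s\<in>V. \<Sum>t\<in>V. x s * closed_adj E s t * y t)"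
    by (simp add: closed_adj_mult_def sum_distrib_left mult.assoc)
  also have "\<dots> = (\<Sum>t\<in>V. \<Sum>s\<in>V. y t * (closed_adj E t s * x s))"
    by (subst sum.swap) (simp add: adj_sym mult_ac)
  also have "\<dots> = (\<Sum>t\<in>V. y t * closed_adj_mult V E x t)"
    by (simp add: closed_adj_mult_def sum_distrib_left)
  finally show ?thesis .
qed

lemma finite_closed_kernel: "finite V \<Longrightarrow> finite (closed_kernel V E)"
  by (rule finite_subset[OF _ finite_set_of_finite_funs[of V "{0, 1}" 0]])
    (auto simp: closed_kernel_def)

lemma subspace_closed_kernel: "Z2.subspace (closed_kernel V E)"
  by (auto simp: Z2.subspace_def closed_kernel_iff closed_adj_mult_add closed_adj_mult_scale)
    (simp add: closed_adj_mult_def)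

lemma nullity_eq_0_iff: "finite V \<Longrightarrow> nullity V E = 0 \<longleftrightarrow> closed_kernel V E \<subseteq> {0}"
  unfolding nullity_def by (intro Z2_dim_eq_0_iff finite_closed_kernel)

lemma nullity_del_vertices:
  "nullity (fst (del_vertices V E S)) (snd (del_vertices V E S)) = nullity (V - S) E"
proof -
  have "closed_adj_mult (V - S) (\<lambda>u v. E u v \<and> u \<notin> S \<and> v \<notin> S) x u = closed_adj_mult (V - S) E x u"
    if "u \<in> V - S" for u x
    unfolding closed_adj_mult_def using that by (intro sum.cong) (auto simp: closed_adj_def)
  then have "closed_kernel (V - S) (\<lambda>u v. E u v \<and> u \<notin> S \<and> v \<notin> S) = closed_kernel (V - S) E"
    by (auto simp: closed_kernel_iff)
  then show ?thesis
    by (simp add: del_vertices_def nullity_def)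
qed

lemma closed_kernel_delete_vertex:
  assumes sym: "\<forall>u v. E u v \<longrightarrow> E v u" and fin: "finite V"
    and x: "x \<in> closed_kernel V E" "x v = 1"
  shows "closed_kernel (V - {v}) E = {z \<in> closed_kernel V E. z v = 0}"
proof
  have v: "v \<in> V"
    using x by (auto simp: closed_kernel_iff)
  show "closed_kernel (V - {v}) E \<subseteq> {z \<in> closed_kernel V E. z v = 0}"
  proof
    fix y assume y: "y \<in> closed_kernel (V - {v}) E"
    then have yv: "y v = 0"
      by (simp add: closed_kernel_iff)
    have Ny: "closed_adj_mult V E y u = 0" if "u \<in> V" "u \<noteq> v" for u
      using y that closed_adj_mult_delete_vertex[where y=y, OF fin v yv] by (simp add: closed_kernel_iff)
    have "closed_adj_mult V E y v = (\<Sum>t\<in>V. x t * closed_adj_mult V E y t)"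
      using Ny x(2) by (simp add: sum.remove[OF fin v])
    also have "\<dots> = (\<Sum>t\<in>V. y t * closed_adj_mult V E x t)"
      by (rule closed_adj_mult_self_adjoint[OF sym])
    also have "\<dots> = 0"
      using x(1) by (simp add: closed_kernel_iff)
    finally show "y \<in> {z \<in> closed_kernel V E. z v = 0}"
      using y yv Ny by (auto simp: closed_kernel_iff)
  qed
  show "{z \<in> closed_kernel V E. z v = 0} \<subseteq> closed_kernel (V - {v}) E"
    using closed_adj_mult_delete_vertex[OF fin v] by (auto simp: closed_kernel_iff)
qed

lemma nullity_delete_vertex:
  assumes "\<forall>u v. E u v \<longrightarrow> E v u" "finite V" "x \<in> closed_kernel V E" "x v = 1"
  shows "nullity V E = Suc (nullity (V - {v}) E)"
  unfolding nullity_def closed_kernel_delete_vertex[OF assms]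
  using finite_closed_kernel[OF assms(2)] subspace_closed_kernel assms(3,4)
  by (rule Z2_dim_eq_Suc_dim_hyperplane)

lemma closed_adj_mult_nonzero_kernel_delete_vertex:
  assumes fin: "finite V" and v: "v \<in> V" and nonsing: "nullity V E = 0"
    and w: "w \<in> closed_kernel (V - {v}) E" "w \<noteq> 0" and u: "u \<in> V"
  shows "closed_adj_mult V E w u = (if u = v then 1 else 0)"
proof -
  have wv: "w v = 0"
    using w(1) by (simp add: closed_kernel_iff)
  have off: "closed_adj_mult V E w t = 0" if "t \<in> V" "t \<noteq> v" for t
    using w(1) that closed_adj_mult_delete_vertex[where y=w, OF fin v wv]
    by (simp add: closed_kernel_iff)
  have "w \<notin> closed_kernel V E"
    using nonsing w(2) nullity_eq_0_iff[OF fin] by auto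
  moreover have "\<forall>t. t \<notin> V \<longrightarrow> w t = 0"
    using w(1) by (simp add: closed_kernel_iff)
  ultimately have "closed_adj_mult V E w v \<noteq> 0"
    using off by (metis closed_kernel_iff)
  then show ?thesis
    using off u by auto
qed

lemma sum_sum_symmetric_eq_diagonal:
  fixes f :: "'a \<Rightarrow> 'a \<Rightarrow> bit"
  assumes "finite A" and "\<And>a b. a \<in> A \<Longrightarrow> b \<in> A \<Longrightarrow> f a b = f b a"
  shows "(\<Sum>a\<in>A. \<Sum>b\<in>A. f a b) = (\<Sum>a\<in>A. f a a)"
  using assms
proof (induction A rule: finite_induct)
  case empty
  then show ?case by simp
next
  case (insert a A)
  have "(\<Sum>b\<in>A. f b a) = (\<Sum>b\<in>A. f a b)"
    using insert.prems by (intro sum.cong) auto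
  moreover have "(\<Sum>x\<in>A. \<Sum>y\<in>A. f x y) = (\<Sum>x\<in>A. f x x)"
    using insert.prems by (intro insert.IH) auto
  ultimately show ?case
    using insert.hyps by (simp add: sum.distrib algebra_simps)
qed

lemma right_inverse_symmetric:
  assumes sym: "\<forall>u v. E u v \<longrightarrow> E v u" and fin: "finite V" and u: "u \<in> V" and v: "v \<in> V"
    and inv: "\<And>v u. v \<in> V \<Longrightarrow> u \<in> V \<Longrightarrow> closed_adj_mult V E (w v) u = (if u = v then 1 else 0)"
  shows "w u v = w v u"
proof -
  have pair: "(\<Sum>t\<in>V. w a t * closed_adj_mult V E (w b) t) = w a b" if "b \<in> V" for a b
  proof -
    have "(\<Sum>t\<in>V. w a t * closed_adj_mult V E (w b) t) = (\<Sum>t\<in>V. if t = b then w a t else 0)"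
      using that by (intro sum.cong) (auto simp: inv)
    then show ?thesis
      using fin that by simp
  qed
  show ?thesis
    using pair[OF u, of v] pair[OF v, of u] closed_adj_mult_self_adjoint[OF sym, where x="w u" and y="w v"]
    by simp
qed

lemma right_inverse_diagonal_nonzero:
  assumes sym: "\<forall>u v. E u v \<longrightarrow> E v u" and fin: "finite V" and "V \<noteq> {}"
    and inv: "\<And>v u. v \<in> V \<Longrightarrow> u \<in> V \<Longrightarrow> closed_adj_mult V E (w v) u = (if u = v then 1 else 0)"
  shows "\<exists>v\<in>V. w v v \<noteq> 0"
proof (rule ccontr)
  assume "\<not> ?thesis"
  then have diag: "w v v = 0" if "v \<in> V" for v
    using that by blast
  obtain u0 where u0: "u0 \<in> V"
    using \<open>V \<noteq> {}\<close> by blast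
  \<comment> \<open>\<open>w v\<close> is the \<open>v\<close>-th column of \<open>W = N\<^sup>-\<^sup>1\<close>, \<open>z\<close> the \<open>u\<^sub>0\<close>-th column of \<open>N\<close>, \<open>s = W z\<close>\<close>
  define z where "z t = closed_adj E t u0" for t
  define s where "s t = (\<Sum>v\<in>V. z v * w v t)" for t
  define e where "e t = (if t = u0 then 1 else 0 :: bit)" for t
  have Ns: "closed_adj_mult V E s u = z u" if u: "u \<in> V" for u
  proof -
    have "closed_adj_mult V E s u = (\<Sum>v\<in>V. z v * closed_adj_mult V E (w v) u)"
      unfolding closed_adj_mult_def s_def sum_distrib_left
      by (subst sum.swap) (simp add: mult_ac)
    also have "\<dots> = (\<Sum>v\<in>V. if v = u then z v else 0)"
      using u by (intro sum.cong) (auto simp: inv)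
    finally show ?thesis
      using fin u by simp
  qed
  have Ne: "closed_adj_mult V E e t = z t" for t
    using fin u0 by (simp add: closed_adj_mult_def e_def z_def if_distrib cong: if_cong)
  have "(\<Sum>t\<in>V. z t * s t) = (\<Sum>t\<in>V. s t * closed_adj_mult V E e t)"
    by (simp add: Ne mult.commute)
  also have "\<dots> = (\<Sum>t\<in>V. e t * closed_adj_mult V E s t)"
    by (rule closed_adj_mult_self_adjoint[OF sym])
  also have "\<dots> = (\<Sum>t\<in>V. if t = u0 then z t else 0)"
    by (intro sum.cong) (auto simp: e_def Ns)
  also have "\<dots> = z u0"
    using fin u0 by simp
  also have "\<dots> = 1"
    by (simp add: z_def closed_adj_def)
  finally have "(\<Sum>t\<in>V. z t * s t) = 1" .
  \<comment> \<open>but \<open>W\<close> is symmetric with zero diagonal, hence alternating over \<open>\<int>\<^sub>2\<close>\<close>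
  have "(\<Sum>t\<in>V. z t * s t) = (\<Sum>t\<in>V. \<Sum>v\<in>V. z t * z v * w v t)"
    by (simp add: s_def sum_distrib_left mult.assoc)
  also have "\<dots> = (\<Sum>t\<in>V. z t * z t * w t t)"
    using right_inverse_symmetric[OF sym fin _ _ inv]
    by (intro sum_sum_symmetric_eq_diagonal[OF fin]) (simp add: mult_ac)
  also have "\<dots> = 0"
    by (simp add: diag)
  finally show False
    using \<open>(\<Sum>t\<in>V. z t * s t) = 1\<close> by simp
qed

lemma exists_vertex_nonsingular_delete_vertex:
  assumes sym: "\<forall>u v. E u v \<longrightarrow> E v u" and fin: "finite V" and "V \<noteq> {}"
    and nonsing: "nullity V E = 0"
  shows "\<exists>v\<in>V. nullity (V - {v}) E = 0"
proof (rule ccontr)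
  assume "\<not> ?thesis"
  then have "\<forall>v\<in>V. \<exists>w. w \<in> closed_kernel (V - {v}) E \<and> w \<noteq> 0"
    using fin by (auto simp: nullity_eq_0_iff)
  then obtain w where w: "\<And>v. v \<in> V \<Longrightarrow> w v \<in> closed_kernel (V - {v}) E \<and> w v \<noteq> 0"
    by metis
  have inv: "closed_adj_mult V E (w v) u = (if u = v then 1 else 0)" if "v \<in> V" "u \<in> V" for v u
    using w that by (intro closed_adj_mult_nonzero_kernel_delete_vertex[OF fin _ nonsing]) auto
  have "w v v = 0" if "v \<in> V" for v
    using w[OF that] by (simp add: closed_kernel_iff)
  then show False
    using right_inverse_diagonal_nonzero[OF sym fin \<open>V \<noteq> {}\<close> inv] by blast
qed

lemma exists_vertex_nullity_delete_vertex:
  assumes sym: "\<forall>u v. E u v \<longrightarrow> E v u" and fin: "finite V" and "V \<noteq> {}"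
  shows "\<exists>v\<in>V. nullity (V - {v}) E = nullity V E - 1"
proof (cases "nullity V E = 0")
  case True
  then show ?thesis
    using exists_vertex_nonsingular_delete_vertex[OF assms] by simp
next
  case False
  then obtain x where x: "x \<in> closed_kernel V E" "x \<noteq> 0"
    using fin by (auto simp: nullity_eq_0_iff)
  then obtain v where xv: "x v = 1"
    by (auto simp: fun_eq_iff)
  then have "v \<in> V"
    using x(1) by (auto simp: closed_kernel_iff)
  moreover have "nullity V E = Suc (nullity (V - {v}) E)"
    using nullity_delete_vertex[OF sym fin x(1) xv] .
  ultimately show ?thesis
    by auto
qed

lemma nullity_deletion_order:
  assumes sym: "\<forall>u v. E u v \<longrightarrow> E v u" and "finite V"
  shows "\<exists>vs. distinct vs \<and> set vs = V \<and> (\<forall>k. nullity (V - set (take k vs)) E = nullity V E - k)"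
  using \<open>finite V\<close>
proof (induction V rule: finite_remove_induct)
  case empty
  have "nullity {} E = 0"
    by (auto simp: nullity_eq_0_iff closed_kernel_iff fun_eq_iff)
  then show ?case
    by simp
next
  case (remove A)
  obtain v where v: "v \<in> A" and nullity_v: "nullity (A - {v}) E = nullity A E - 1"
    using exists_vertex_nullity_delete_vertex[OF sym remove.hyps(1,2)] by blast
  obtain vs where vs: "distinct vs" "set vs = A - {v}"
    and nullity_vs: "\<And>k. nullity (A - {v} - set (take k vs)) E = nullity (A - {v}) E - k"
    using remove.IH[OF v] by blast
  have "nullity (A - set (take k (v # vs))) E = nullity A E - k" for k
  proof (cases k)
    case (Suc j)
    have "A - set (take k (v # vs)) = A - {v} - set (take j vs)"
      using Suc by auto
    then show ?thesis
      using Suc nullity_vs nullity_v by simp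
  qed simp
  then show ?case
    using vs v by (intro exI[of _ "v # vs"]) auto
qed

theorem theorem2p8:
  fixes V :: "'a set" and E :: "'a \<Rightarrow> 'a \<Rightarrow> bool"
  assumes "simple_graph V E"
  shows "\<exists>vs. distinct vs \<and> set vs = V \<and> length vs = card V \<and>
           (\<forall>k. k < nullity V E \<longrightarrow>
              nullity (fst (del_vertices V E (set (take k vs)))) (snd (del_vertices V E (set (take k vs))))
                = nullity V E - k) \<and>
           (\<forall>k. nullity V E \<le> k \<and> k \<le> card V \<longrightarrow>
              nullity (fst (del_vertices V E (set (take k vs)))) (snd (del_vertices V E (set (take k vs)))) = 0)"
proof -
  have "finite V" and sym: "\<forall>u v. E u v \<longrightarrow> E v u"
    using assms by (auto simp: simple_graph_def)
  then obtain vs where vs: "distinct vs" "set vs = V"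
    and nullity_vs: "\<And>k. nullity (V - set (take k vs)) E = nullity V E - k"
    using nullity_deletion_order by blast
  have "length vs = card V"
    using vs distinct_card by metis
  then show ?thesis
    unfolding nullity_del_vertices using vs nullity_vs by (intro exI[of _ vs]) auto
qed

end
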